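(* Let $G$ be a quasitopological group and define groups with topology $G_\alpha$ (all with underlying group $G$) for ordinals $\alpha$ by transfinite recursion: $G_0=G$; $G_{\alpha}=c(G_{\alpha-1})$ if $\alpha$ is a successor ordinal; and, if $\alpha$ is a limit ordinal, $G_\alpha$ has topology $\bigcap_{\beta<\alpha}\mathcal T_{G_\beta}$, where $\mathcal T_{G_\beta}$ is the topology of $G_\beta$. Then each $G_\alpha$ is a quasitopological group, and there is an ordinal $\alpha$ such that $G_\alpha=\tau(G)$ (i.e. $\mathcal T_{G_\alpha}$ equals the topology of $\tau(G)$).
   Context: A quasitopological group is a group with a topology in which inversion is continuous and multiplication is separately continuous in each variable. For a quasitopological group $H$, $c(H)$ is the group $H$ with the quotient topology with respect to the multiplication map $\mu_H:H\times H\to H$. $F_M(S)$ is the free (Markov) topological group on a space $S$. For a group with topology $G$, $\tau(G)$ is $G$ with the quotient topology with respect to the multiplication epimorphism $m_G:F_M(G)\to G$ sending each generator $g$ to $g$. *)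

theory Defs
  imports "HOL-Analysis.Analysis" "HOL-Algebra.Group"
begin

definition group_with_topology :: "'g monoid \<Rightarrow> 'g topology \<Rightarrow> bool" where
  "group_with_topology G T \<longleftrightarrow> group G \<and> topspace T = carrier G"

definition quasitopological_group :: "'g monoid \<Rightarrow> 'g topology \<Rightarrow> bool" where
  "quasitopological_group G T \<longleftrightarrow> group_with_topology G T
     \<and> continuous_map T T (\<lambda>x. inv\<^bsub>G\<^esub> x)
     \<and> (\<forall>a \<in> carrier G. continuous_map T T (\<lambda>x. a \<otimes>\<^bsub>G\<^esub> x)
                      \<and> continuous_map T T (\<lambda>x. x \<otimes>\<^bsub>G\<^esub> a))"

definition topological_group :: "'g monoid \<Rightarrow> 'g topology \<Rightarrow> bool" where
  "topological_group G T \<longleftrightarrow> group_with_topology G T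
     \<and> continuous_map (prod_topology T T) T (\<lambda>(x, y). x \<otimes>\<^bsub>G\<^esub> y)
     \<and> continuous_map T T (\<lambda>x. inv\<^bsub>G\<^esub> x)"

text \<open>Quotient topology on the set S induced by a map f from X (intended with
  S = f ` topspace X): U is open iff U \<subseteq> S and its preimage is open in X.\<close>
definition quotient_topology :: "'a topology \<Rightarrow> ('a \<Rightarrow> 'b) \<Rightarrow> 'b set \<Rightarrow> 'b topology" where
  "quotient_topology X f S =
     topology (\<lambda>U. U \<subseteq> S \<and> openin X {x \<in> topspace X. f x \<in> U})"

definition c_top :: "'g monoid \<Rightarrow> 'g topology \<Rightarrow> 'g topology" where
  "c_top G T = quotient_topology (prod_topology T T) (\<lambda>(x, y). x \<otimes>\<^bsub>G\<^esub> y) (carrier G)"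

text \<open>Words: a letter (x, True) stands for x, (x, False) for x^-1.\<close>
type_synonym 'a word = "('a \<times> bool) list"

fun red_cons :: "'a \<times> bool \<Rightarrow> 'a word \<Rightarrow> 'a word" where
  "red_cons x [] = [x]"
| "red_cons x (y # ys) = (if fst x = fst y \<and> snd x \<noteq> snd y then ys else x # y # ys)"

definition reduce :: "'a word \<Rightarrow> 'a word" where
  "reduce w = foldr red_cons w []"

definition free_group :: "'a set \<Rightarrow> 'a word monoid" where
  "free_group S = \<lparr>carrier = {w. reduce w = w \<and> fst ` set w \<subseteq> S},
                   monoid.mult = (\<lambda>v w. reduce (v @ w)), one = []\<rparr>"

definition free_gen :: "'a \<Rightarrow> 'a word" where
  "free_gen x = [(x, True)]"

text \<open>F_M(X): the free group on topspace X carrying the finest group topology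
  for which the canonical map X \<rightarrow> F(X) is continuous (Markov free topological group).\<close>
definition FM_top :: "'a topology \<Rightarrow> 'a word topology" where
  "FM_top X = topology_generated_by
     (\<Union> {{U. openin T U} | T. topological_group (free_group (topspace X)) T
                               \<and> continuous_map X T free_gen})"

definition mult_epi :: "'g monoid \<Rightarrow> 'g word \<Rightarrow> 'g" where
  "mult_epi G w = foldr (\<lambda>(x, b) a. (if b then x else inv\<^bsub>G\<^esub> x) \<otimes>\<^bsub>G\<^esub> a) w \<one>\<^bsub>G\<^esub>"

definition tau_top :: "'g monoid \<Rightarrow> 'g topology \<Rightarrow> 'g topology" where
  "tau_top G T = quotient_topology (FM_top T) (mult_epi G) (carrier G)"

text \<open>S is the transfinite sequence of topologies G_alpha, indexed by the
  well-ordered type 'i (an initial segment of the ordinals):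
  value T at the least index, c(previous) at successors, and at limits the
  intersection of all earlier topologies.\<close>
definition transfinite_seq :: "'g monoid \<Rightarrow> 'g topology \<Rightarrow> ('i::wellorder \<Rightarrow> 'g topology) \<Rightarrow> bool" where
  "transfinite_seq G T S \<longleftrightarrow>
     (\<forall>i. (\<forall>j. \<not> j < i) \<longrightarrow> S i = T)
   \<and> (\<forall>i j. j < i \<and> \<not> (\<exists>k. j < k \<and> k < i) \<longrightarrow> S i = c_top G (S j))
   \<and> (\<forall>i. (\<exists>j. j < i) \<and> (\<forall>j. j < i \<longrightarrow> (\<exists>k. j < k \<and> k < i))
          \<longrightarrow> S i = topology (\<lambda>U. \<forall>j. j < i \<longrightarrow> openin (S j) U))"

end

theory Submission
  imports Defs
begin

text \<open>
  \<^item> c(H) is always coarser than H, and c(H) is finer than every coarser topology in which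
    multiplication is jointly continuous; c preserves quasitopological groups, and so do
    intersections of families of topologies.  Hence, by transfinite induction, every G_alpha is
    a quasitopological group and the sequence of topologies is decreasing.
  \<^item> Multiplication of tau(G) is jointly continuous (m_G is an open homomorphism and the
    multiplication of F_M(G) is continuous) and tau(G) is coarser than T; by induction,
    tau(G) is coarser than every G_alpha.
  \<^item> If the index type admits no injection into the topologies on G, two members of the
    decreasing sequence coincide, so some G_a is a fixed point of c.  A fixed point of c is a
    topological group; pulling it back along m_G yields a member of the family defining
    F_M(G), so G_a is also coarser than tau(G).  Thus G_a = tau(G).
\<close>

subsection \<open>The free group on a set\<close>

fun reduced_word :: "'a word \<Rightarrow> bool" where
  "reduced_word [] = True"
| "reduced_word [x] = True"
| "reduced_word (x # y # ys) = (\<not> (fst x = fst y \<and> snd x \<noteq> snd y) \<and> reduced_word (y # ys))"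

definition flip_letter :: "'a \<times> bool \<Rightarrow> 'a \<times> bool" where
  "flip_letter x = (fst x, \<not> snd x)"

definition word_inv :: "'a word \<Rightarrow> 'a word" where
  "word_inv w = rev (map flip_letter w)"

text \<open>Prepending the word u to the word z letter by letter with cancellation;
  the free-group product of two reduced words is red_app u z (shown below).\<close>
definition red_app :: "'a word \<Rightarrow> 'a word \<Rightarrow> 'a word" where
  "red_app u z = foldr red_cons u z"

lemma red_app_simps [simp]:
  "red_app [] z = z"
  "red_app (x # u) z = red_cons x (red_app u z)"
  "red_app (u @ v) z = red_app u (red_app v z)"
  by (auto simp: red_app_def)

lemma reduce_eq_red_app: "reduce w = red_app w []"
  by (simp add: reduce_def red_app_def)

lemma reduced_tl: "reduced_word (x # ys) \<Longrightarrow> reduced_word ys"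
  by (cases ys) auto

lemma reduced_red_cons: "reduced_word z \<Longrightarrow> reduced_word (red_cons x z)"
  by (cases z) (auto intro: reduced_tl)

lemma reduced_red_app: "reduced_word z \<Longrightarrow> reduced_word (red_app u z)"
  by (induction u) (auto intro: reduced_red_cons)

lemma reduced_reduce: "reduced_word (reduce w)"
  by (simp add: reduce_eq_red_app reduced_red_app)

lemma reduce_reduced: "reduced_word z \<Longrightarrow> reduce z = z"
proof (induction z)
  case (Cons x z)
  then have "reduce z = z" by (auto intro: reduced_tl)
  then show ?case using Cons.prems by (cases z) (auto simp: reduce_eq_red_app)
qed (simp add: reduce_def)

lemma red_cons_cancel:
  assumes "reduced_word z"
  shows "red_cons x (red_cons (flip_letter x) z) = z"
proof (cases z)
  case (Cons y ys)
  show ?thesis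
  proof (cases "fst (flip_letter x) = fst y \<and> snd (flip_letter x) \<noteq> snd y")
    case True
    then have "x = y" by (cases x; cases y; auto simp: flip_letter_def)
    then show ?thesis using True assms Cons by (cases ys) auto
  qed (use Cons in \<open>auto simp: flip_letter_def\<close>)
qed (simp add: flip_letter_def)

text \<open>Acting on a reduced word, a word and its reduction behave alike; this is the
  key to associativity of the free-group product.\<close>
lemma red_app_reduce:
  assumes "reduced_word z"
  shows "red_app (reduce u) z = red_app u z"
proof (induction u)
  case (Cons x u)
  define r where "r = reduce u"
  have IH: "red_app r z = red_app u z" using Cons by (simp add: r_def)
  have reduce_Cons: "reduce (x # u) = red_cons x r" by (simp add: r_def reduce_eq_red_app)
  show ?case
  proof (cases r)
    case (Cons y r')
    show ?thesis
    proof (cases "fst x = fst y \<and> snd x \<noteq> snd y")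
      case True
      then have "y = flip_letter x" by (cases x; cases y; auto simp: flip_letter_def)
      then have "red_app (x # u) z = red_cons x (red_cons (flip_letter x) (red_app r' z))"
        using IH Cons by simp
      also have "\<dots> = red_app r' z"
        by (rule red_cons_cancel[OF reduced_red_app[OF assms]])
      finally show ?thesis using reduce_Cons Cons True by simp
    qed (use reduce_Cons Cons IH in auto)
  qed (use reduce_Cons IH in simp)
qed (simp add: reduce_def)

lemma red_app_word_inv: "reduced_word z \<Longrightarrow> red_app (word_inv u) (red_app u z) = z"
proof (induction u)
  case (Cons x u)
  have "red_app (word_inv (x # u)) (red_app (x # u) z)
      = red_app (word_inv u) (red_cons (flip_letter x) (red_cons x (red_app u z)))"
    by (simp add: word_inv_def)
  also have "\<dots> = red_app (word_inv u) (red_app u z)"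
    using red_cons_cancel[OF reduced_red_app[OF Cons.prems], of "flip_letter x" u]
    by (simp add: flip_letter_def)
  finally show ?case using Cons by simp
qed (simp add: word_inv_def)

lemma letters_red_app: "fst ` set (red_app u z) \<subseteq> fst ` set u \<union> fst ` set z"
proof -
  have "set (red_cons x w) \<subseteq> insert x (set w)" for x and w :: "'a word"
    by (cases w) auto
  then have "set (red_app u z) \<subseteq> set u \<union> set z"
    by (induction u) fastforce+
  then show ?thesis by blast
qed

lemma carrier_free_group: "carrier (free_group S) = {w. reduced_word w \<and> fst ` set w \<subseteq> S}"
  by (auto simp: free_group_def) (metis reduced_reduce reduce_reduced)+

lemma mult_free_group:
  assumes "reduced_word w"
  shows "v \<otimes>\<^bsub>free_group S\<^esub> w = red_app v w"
proof -
  have "reduce (v @ w) = red_app v (reduce w)" by (simp add: reduce_eq_red_app)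
  then show ?thesis using assms by (simp add: free_group_def reduce_reduced)
qed

lemma free_gen_carrier: "x \<in> S \<Longrightarrow> free_gen x \<in> carrier (free_group S)"
  by (simp add: free_gen_def carrier_free_group)

lemma group_free_group: "group (free_group S)"
proof (rule groupI)
  let ?F = "free_group S"
  show closed: "x \<otimes>\<^bsub>?F\<^esub> y \<in> carrier ?F" if "x \<in> carrier ?F" "y \<in> carrier ?F" for x y
  proof -
    have "fst ` set x \<subseteq> S" "fst ` set y \<subseteq> S" using that by (auto simp: carrier_free_group)
    then have "fst ` set (red_app x y) \<subseteq> S" using letters_red_app[of x y] by blast
    then show ?thesis
      using that reduced_red_app[of y x] by (simp add: carrier_free_group mult_free_group)
  qed
  show "\<one>\<^bsub>?F\<^esub> \<in> carrier ?F" by (simp add: free_group_def reduce_def)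
  show "x \<otimes>\<^bsub>?F\<^esub> y \<otimes>\<^bsub>?F\<^esub> z = x \<otimes>\<^bsub>?F\<^esub> (y \<otimes>\<^bsub>?F\<^esub> z)"
    if "x \<in> carrier ?F" "y \<in> carrier ?F" "z \<in> carrier ?F" for x y z
  proof -
    have z: "reduced_word z" and yz: "reduced_word (red_app y z)"
      using that reduced_red_app by (auto simp: carrier_free_group)
    have "x \<otimes>\<^bsub>?F\<^esub> y \<otimes>\<^bsub>?F\<^esub> z = red_app (reduce (x @ y)) z"
      using z by (simp add: mult_free_group) (simp add: free_group_def)
    also have "\<dots> = red_app x (red_app y z)" using z by (simp add: red_app_reduce)
    finally show ?thesis using z yz by (simp add: mult_free_group)
  qed
  show "\<one>\<^bsub>?F\<^esub> \<otimes>\<^bsub>?F\<^esub> x = x" if "x \<in> carrier ?F" for x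
    using that by (simp add: free_group_def reduce_reduced)
  show "\<exists>y\<in>carrier ?F. y \<otimes>\<^bsub>?F\<^esub> x = \<one>\<^bsub>?F\<^esub>" if x: "x \<in> carrier ?F" for x
  proof
    have rx: "reduced_word x" using x by (simp add: carrier_free_group)
    have "reduce (word_inv x) \<otimes>\<^bsub>?F\<^esub> x = red_app (word_inv x) (red_app x [])"
      using rx by (simp add: mult_free_group red_app_reduce reduce_eq_red_app[symmetric] reduce_reduced)
    then show "reduce (word_inv x) \<otimes>\<^bsub>?F\<^esub> x = \<one>\<^bsub>?F\<^esub>"
      by (simp add: red_app_word_inv free_group_def)
    have "fst ` set (word_inv x) = fst ` set x"
      by (force simp: word_inv_def flip_letter_def image_iff)
    moreover have "fst ` set (reduce (word_inv x)) \<subseteq> fst ` set (word_inv x)"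
      using letters_red_app[of "word_inv x" "[]"] by (simp add: reduce_eq_red_app)
    moreover have "fst ` set x \<subseteq> S" using x by (simp add: carrier_free_group)
    ultimately have "fst ` set (reduce (word_inv x)) \<subseteq> S" by (metis order_trans)
    then show "reduce (word_inv x) \<in> carrier ?F"
      by (simp add: carrier_free_group reduced_reduce)
  qed
qed

context
  fixes G :: "'g monoid" (structure)
  assumes grp: "group G"
begin

interpretation group G by (rule grp)

lemma mult_epi_Nil [simp]: "mult_epi G [] = \<one>"
  by (simp add: mult_epi_def)

lemma mult_epi_Cons [simp]:
  "mult_epi G ((a, b) # w) = (if b then a else inv a) \<otimes> mult_epi G w"
  by (simp add: mult_epi_def)

lemma mult_epi_closed: "fst ` set w \<subseteq> carrier G \<Longrightarrow> mult_epi G w \<in> carrier G"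
  by (induction w) (auto simp: mult_epi_def)

lemma mult_epi_free_gen: "x \<in> carrier G \<Longrightarrow> mult_epi G (free_gen x) = x"
  by (simp add: free_gen_def mult_epi_def)

lemma mult_epi_red_cons:
  assumes "fst x \<in> carrier G" "fst ` set z \<subseteq> carrier G"
  shows "mult_epi G (red_cons x z) = mult_epi G [x] \<otimes> mult_epi G z"
proof (cases z)
  case (Cons y ys)
  obtain a b c d where "x = (a, b)" "y = (c, d)" by fastforce
  moreover have "mult_epi G ys \<in> carrier G" using assms Cons by (auto intro!: mult_epi_closed)
  ultimately show ?thesis
    using Cons assms by (auto simp: m_assoc[symmetric] mult_epi_def)
qed (use assms in \<open>cases x, auto simp: mult_epi_def\<close>)

lemma mult_epi_red_app:
  assumes "fst ` set u \<subseteq> carrier G" "fst ` set z \<subseteq> carrier G"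
  shows "mult_epi G (red_app u z) = mult_epi G u \<otimes> mult_epi G z"
  using assms
proof (induction u)
  case (Cons x u)
  have "fst ` set u \<subseteq> carrier G" using Cons.prems(1) by auto
  then have "fst ` set (red_app u z) \<subseteq> carrier G"
    using letters_red_app[of u z] Cons.prems(2) by blast
  then have "mult_epi G (red_app (x # u) z) = mult_epi G [x] \<otimes> (mult_epi G u \<otimes> mult_epi G z)"
    using Cons by (simp add: mult_epi_red_cons)
  then show ?case using Cons.prems by (cases x) (auto simp: m_assoc mult_epi_closed)
qed (simp add: mult_epi_closed)

lemma mult_epi_group_hom: "group_hom (free_group (carrier G)) G (mult_epi G)"
proof -
  have "mult_epi G \<in> hom (free_group (carrier G)) G"
    by (rule homI) (auto simp: carrier_free_group mult_free_group mult_epi_red_app mult_epi_closed)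
  then show ?thesis
    by (simp add: group_hom_def group_hom_axioms_def group_free_group grp)
qed

end

lemma openin_quotient_topology:
  "openin (quotient_topology X q S) U \<longleftrightarrow> U \<subseteq> S \<and> openin X {x \<in> topspace X. q x \<in> U}"
proof -
  have "istopology (\<lambda>U. U \<subseteq> S \<and> openin X {x \<in> topspace X. q x \<in> U})"
    unfolding istopology_def
  proof (rule conjI; intro allI impI)
    fix U V
    assume "U \<subseteq> S \<and> openin X {x \<in> topspace X. q x \<in> U}"
      "V \<subseteq> S \<and> openin X {x \<in> topspace X. q x \<in> V}"
    moreover have "{x \<in> topspace X. q x \<in> U \<inter> V}
        = {x \<in> topspace X. q x \<in> U} \<inter> {x \<in> topspace X. q x \<in> V}" by auto
    ultimately show "U \<inter> V \<subseteq> S \<and> openin X {x \<in> topspace X. q x \<in> U \<inter> V}" by auto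
  next
    fix \<U> assume \<U>: "\<forall>U\<in>\<U>. U \<subseteq> S \<and> openin X {x \<in> topspace X. q x \<in> U}"
    have "{x \<in> topspace X. q x \<in> \<Union>\<U>} = (\<Union>U\<in>\<U>. {x \<in> topspace X. q x \<in> U})" by auto
    then show "\<Union>\<U> \<subseteq> S \<and> openin X {x \<in> topspace X. q x \<in> \<Union>\<U>}" using \<U> by auto
  qed
  then show ?thesis by (simp add: quotient_topology_def)
qed

lemma topspace_quotient_topology:
  assumes "q ` topspace X \<subseteq> S"
  shows "topspace (quotient_topology X q S) = S"
proof -
  have "{x \<in> topspace X. q x \<in> S} = topspace X" using assms by auto
  then have "openin (quotient_topology X q S) S" by (simp add: openin_quotient_topology)
  then have "S \<subseteq> topspace (quotient_topology X q S)" by (rule openin_subset)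
  moreover have "topspace (quotient_topology X q S) \<subseteq> S"
    using openin_topspace[of "quotient_topology X q S"] unfolding openin_quotient_topology by blast
  ultimately show ?thesis by (simp only: set_eq_subset)
qed

lemma continuous_map_quotient_topology_lift:
  assumes q: "q ` topspace X \<subseteq> S" and f: "f ` S \<subseteq> S"
    and h: "continuous_map X X h"
    and lift: "\<And>x. x \<in> topspace X \<Longrightarrow> q (h x) = f (q x)"
  shows "continuous_map (quotient_topology X q S) (quotient_topology X q S) f"
  unfolding continuous_map_def topspace_quotient_topology[OF q]
proof (intro conjI allI impI)
  show "f \<in> S \<rightarrow> S" using f by auto
  fix U assume "openin (quotient_topology X q S) U"
  then have "openin X {x \<in> topspace X. h x \<in> {y \<in> topspace X. q y \<in> U}}"
    using h by (auto simp: openin_quotient_topology continuous_map_def)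
  moreover have "{x \<in> topspace X. h x \<in> {y \<in> topspace X. q y \<in> U}}
      = {x \<in> topspace X. q x \<in> {y \<in> S. f y \<in> U}}"
    using q h lift by (auto simp: continuous_map_def)
  ultimately show "openin (quotient_topology X q S) {y \<in> S. f y \<in> U}"
    by (simp add: openin_quotient_topology)
qed

lemma openin_prod_topology_mono:
  assumes "\<And>U. openin X U \<Longrightarrow> openin X' U" "\<And>U. openin Y U \<Longrightarrow> openin Y' U"
    and "openin (prod_topology X Y) W"
  shows "openin (prod_topology X' Y') W"
  using assms(3) unfolding openin_prod_topology_alt by (meson assms(1,2))

lemma openin_Inter_topology:
  "openin (topology (\<lambda>U. \<forall>j. P j \<longrightarrow> openin (S j) U)) U \<longleftrightarrow> (\<forall>j. P j \<longrightarrow> openin (S j) U)"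
proof -
  have "istopology (\<lambda>U. \<forall>j. P j \<longrightarrow> openin (S j) U)"
    unfolding istopology_def by auto
  then show ?thesis by simp
qed

lemma topspace_Inter_topology:
  assumes "P j0" "\<And>j. P j \<Longrightarrow> topspace (S j) = A"
  shows "topspace (topology (\<lambda>U. \<forall>j. P j \<longrightarrow> openin (S j) U)) = A"
proof -
  let ?X = "topology (\<lambda>U. \<forall>j. P j \<longrightarrow> openin (S j) U)"
  have "openin (S j) A" if "P j" for j
    using openin_topspace[of "S j"] assms(2)[OF that] by simp
  then have "A \<subseteq> topspace ?X" by (intro openin_subset) (simp add: openin_Inter_topology)
  moreover have "openin (S j0) (topspace ?X)"
    using openin_topspace[of ?X] assms(1) unfolding openin_Inter_topology by blast
  then have "topspace ?X \<subseteq> A" using openin_subset assms(2)[OF assms(1)] by blast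
  ultimately show ?thesis by (simp only: set_eq_subset)
qed

lemma continuous_map_Inter_topology:
  assumes "P j0" "\<And>j. P j \<Longrightarrow> topspace (S j) = A" "f ` A \<subseteq> A"
    and "\<And>j. P j \<Longrightarrow> continuous_map (S j) (S j) f"
  shows "continuous_map (topology (\<lambda>U. \<forall>j. P j \<longrightarrow> openin (S j) U))
                        (topology (\<lambda>U. \<forall>j. P j \<longrightarrow> openin (S j) U)) f"
proof -
  let ?X = "topology (\<lambda>U. \<forall>j. P j \<longrightarrow> openin (S j) U)"
  have top: "topspace ?X = A" by (rule topspace_Inter_topology[of P j0 S A, OF assms(1,2)])
  have "openin ?X {x \<in> A. f x \<in> U}" if U: "openin ?X U" for U
  proof -
    have "openin (S j) {x \<in> A. f x \<in> U}" if "P j" for j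
    proof -
      have "openin (S j) U" using U that by (simp add: openin_Inter_topology)
      from openin_continuous_map_preimage[OF assms(4)[OF that] this] show ?thesis
        by (simp add: assms(2)[OF that])
    qed
    then show ?thesis by (simp add: openin_Inter_topology)
  qed
  then show ?thesis using assms(3) by (simp add: continuous_map top)
qed

lemma quasitopological_groupD:
  assumes "quasitopological_group G H"
  shows "group G" "topspace H = carrier G" "continuous_map H H (\<lambda>x. inv\<^bsub>G\<^esub> x)"
    "\<And>a. a \<in> carrier G \<Longrightarrow> continuous_map H H (\<lambda>x. a \<otimes>\<^bsub>G\<^esub> x)"
    "\<And>a. a \<in> carrier G \<Longrightarrow> continuous_map H H (\<lambda>x. x \<otimes>\<^bsub>G\<^esub> a)"
  using assms by (auto simp: quasitopological_group_def group_with_topology_def)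

lemma quasitopological_group_Inter_topology:
  assumes "P j0" "\<And>j. P j \<Longrightarrow> quasitopological_group G (S j)"
  shows "quasitopological_group G (topology (\<lambda>U. \<forall>j. P j \<longrightarrow> openin (S j) U))"
proof -
  let ?X = "topology (\<lambda>U. \<forall>j. P j \<longrightarrow> openin (S j) U)"
  have grp: "group G" using assms quasitopological_groupD(1) by blast
  interpret group G by (rule grp)
  have ts: "\<And>j. P j \<Longrightarrow> topspace (S j) = carrier G"
    using assms(2) quasitopological_groupD(2) by blast
  note cont = continuous_map_Inter_topology[of P j0 S "carrier G", OF assms(1) ts]
  have "continuous_map ?X ?X (\<lambda>x. inv\<^bsub>G\<^esub> x)"
    by (rule cont) (auto intro: quasitopological_groupD(3)[OF assms(2)])
  moreover have "continuous_map ?X ?X (\<lambda>x. a \<otimes>\<^bsub>G\<^esub> x)" "continuous_map ?X ?X (\<lambda>x. x \<otimes>\<^bsub>G\<^esub> a)"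
    if a: "a \<in> carrier G" for a
    using a by (auto intro!: cont quasitopological_groupD(4,5)[OF assms(2)])
  ultimately show ?thesis
    by (simp add: quasitopological_group_def group_with_topology_def grp
        topspace_Inter_topology[of P j0 S "carrier G", OF assms(1) ts])
qed

subsection \<open>The topology c(H)\<close>

context
  fixes G :: "'g monoid" (structure) and H :: "'g topology"
  assumes grp: "group G" and top_H: "topspace H = carrier G"
begin

interpretation group G by (rule grp)

lemma openin_c_top:
  "openin (c_top G H) U \<longleftrightarrow> U \<subseteq> carrier G \<and>
     openin (prod_topology H H) {z \<in> topspace (prod_topology H H). (\<lambda>(x, y). x \<otimes> y) z \<in> U}"
  by (simp add: c_top_def openin_quotient_topology)

lemma topspace_c_top: "topspace (c_top G H) = carrier G"
  unfolding c_top_def by (rule topspace_quotient_topology) (auto simp: top_H)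

text \<open>c(H) is coarser than H: a set whose preimage under multiplication is open has
  open preimage under x \<mapsto> (x, 1), which is just the set itself.\<close>
lemma c_top_coarser:
  assumes U: "openin (c_top G H) U"
  shows "openin H U"
proof -
  let ?W = "{z \<in> topspace (prod_topology H H). (\<lambda>(x, y). x \<otimes> y) z \<in> U}"
  have sub: "U \<subseteq> carrier G" and W: "openin (prod_topology H H) ?W"
    using U by (auto simp: openin_c_top)
  have "continuous_map H (prod_topology H H) (\<lambda>x. (x, \<one>))"
    by (intro continuous_map_pairedI) (simp_all add: top_H)
  then have "openin H {x \<in> topspace H. (x, \<one>) \<in> ?W}"
    using W unfolding continuous_map_def by blast
  moreover have "{x \<in> topspace H. (x, \<one>) \<in> ?W} = U"
    using sub by (auto simp: top_H)
  ultimately show ?thesis by simp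
qed

lemma c_top_finer:
  assumes top_K: "topspace K = carrier G"
    and mult_K: "continuous_map (prod_topology K K) K (\<lambda>(x, y). x \<otimes> y)"
    and KH: "\<And>V. openin K V \<Longrightarrow> openin H V"
    and U: "openin K U"
  shows "openin (c_top G H) U"
proof -
  have "openin (prod_topology K K) {z \<in> topspace (prod_topology K K). (\<lambda>(x, y). x \<otimes> y) z \<in> U}"
    using mult_K U unfolding continuous_map_def by blast
  then have "openin (prod_topology H H) {z \<in> topspace (prod_topology H H). (\<lambda>(x, y). x \<otimes> y) z \<in> U}"
    using openin_prod_topology_mono[OF KH KH] by (simp add: top_K top_H)
  then show ?thesis
    using openin_subset[OF U] by (simp add: openin_c_top top_K)
qed

text \<open>If H is a quasitopological group, so is c(H): inversion and translations lift along
  multiplication to continuous self-maps of H \<times> H.\<close>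
lemma quasitopological_group_c_top:
  assumes qt: "quasitopological_group G H"
  shows "quasitopological_group G (c_top G H)"
proof -
  let ?m = "\<lambda>(x, y). x \<otimes> y"
  have lift: "continuous_map (c_top G H) (c_top G H) f"
    if "f ` carrier G \<subseteq> carrier G" "continuous_map (prod_topology H H) (prod_topology H H) h"
      "\<And>x y. x \<in> carrier G \<Longrightarrow> y \<in> carrier G \<Longrightarrow> ?m (h (x, y)) = f (x \<otimes> y)" for f h
    unfolding c_top_def
    by (rule continuous_map_quotient_topology_lift) (use that in \<open>auto simp: top_H\<close>)
  have inv: "continuous_map H H (\<lambda>x. inv x)"
    and transl: "\<And>a. a \<in> carrier G \<Longrightarrow> continuous_map H H (\<lambda>x. a \<otimes> x)"
      "\<And>a. a \<in> carrier G \<Longrightarrow> continuous_map H H (\<lambda>x. x \<otimes> a)"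
    using quasitopological_groupD[OF qt] by auto
  have "continuous_map (c_top G H) (c_top G H) (\<lambda>x. inv x)"
  proof (rule lift[where h = "\<lambda>(x, y). (inv y, inv x)"])
    show "continuous_map (prod_topology H H) (prod_topology H H) (\<lambda>(x, y). (inv y, inv x))"
      unfolding case_prod_unfold
      by (intro continuous_map_pairedI continuous_map_compose[OF continuous_map_snd inv, unfolded o_def]
          continuous_map_compose[OF continuous_map_fst inv, unfolded o_def])
  qed (auto simp: inv_mult_group)
  moreover have "continuous_map (c_top G H) (c_top G H) (\<lambda>x. a \<otimes> x)"
    if a: "a \<in> carrier G" for a
  proof (rule lift[where h = "\<lambda>(x, y). (a \<otimes> x, y)"])
    show "continuous_map (prod_topology H H) (prod_topology H H) (\<lambda>(x, y). (a \<otimes> x, y))"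
      by (rule continuous_map_prod_top[THEN iffD2]) (simp add: transl(1)[OF a])
  qed (auto simp: m_assoc a)
  moreover have "continuous_map (c_top G H) (c_top G H) (\<lambda>x. x \<otimes> a)"
    if a: "a \<in> carrier G" for a
  proof (rule lift[where h = "\<lambda>(x, y). (x, y \<otimes> a)"])
    show "continuous_map (prod_topology H H) (prod_topology H H) (\<lambda>(x, y). (x, y \<otimes> a))"
      by (rule continuous_map_prod_top[THEN iffD2]) (simp add: transl(2)[OF a])
  qed (auto simp: m_assoc a)
  ultimately show ?thesis
    by (simp add: quasitopological_group_def group_with_topology_def grp topspace_c_top)
qed

text \<open>A fixed point of c is a topological group: multiplication H \<times> H \<rightarrow> c(H) = H is
  continuous by the definition of the quotient topology.\<close>
lemma topological_group_if_c_top_fixed: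
  assumes qt: "quasitopological_group G H" and fixed: "c_top G H = H"
  shows "topological_group G H"
proof -
  have "continuous_map (prod_topology H H) H (\<lambda>(x, y). x \<otimes> y)"
    unfolding continuous_map_def
  proof (intro conjI allI impI)
    show "(\<lambda>(x, y). x \<otimes> y) \<in> topspace (prod_topology H H) \<rightarrow> topspace H"
      by (auto simp: top_H)
    fix U assume "openin H U"
    then show "openin (prod_topology H H) {z \<in> topspace (prod_topology H H). (\<lambda>(x, y). x \<otimes> y) z \<in> U}"
      using fixed openin_c_top[of U] by simp
  qed
  then show ?thesis
    using quasitopological_groupD(3)[OF qt]
    by (simp add: topological_group_def group_with_topology_def grp top_H)
qed

end

definition indiscrete_topology :: "'a set \<Rightarrow> 'a topology" where
  "indiscrete_topology A = topology (\<lambda>U. U = {} \<or> U = A)"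

lemma openin_indiscrete_topology: "openin (indiscrete_topology A) U \<longleftrightarrow> U = {} \<or> U = A"
proof -
  have "istopology (\<lambda>U. U = {} \<or> U = A)"
    unfolding istopology_def
  proof (rule conjI; intro allI impI)
    fix \<U> :: "'a set set" assume "\<forall>U\<in>\<U>. U = {} \<or> U = A"
    then show "\<Union>\<U> = {} \<or> \<Union>\<U> = A" by (cases "A \<in> \<U>") auto
  qed auto
  then show ?thesis by (simp add: indiscrete_topology_def)
qed

lemma topspace_indiscrete_topology: "topspace (indiscrete_topology A) = A"
  by (auto simp: topspace_def openin_indiscrete_topology)

lemma continuous_map_into_indiscrete_topology:
  assumes "g ` topspace Y \<subseteq> A"
  shows "continuous_map Y (indiscrete_topology A) g"
proof -
  have "{y \<in> topspace Y. g y \<in> A} = topspace Y" using assms by auto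
  then show ?thesis
    using assms by (auto simp: continuous_map topspace_indiscrete_topology openin_indiscrete_topology)
qed

lemma topological_group_indiscrete_topology:
  assumes "group G"
  shows "topological_group G (indiscrete_topology (carrier G))"
  using assms
  by (auto simp: topological_group_def group_with_topology_def topspace_indiscrete_topology
      group.inv_closed monoid.m_closed[OF group.is_monoid] intro!: continuous_map_into_indiscrete_topology)

subsection \<open>The Markov free topological group\<close>

definition markov_family :: "'a topology \<Rightarrow> 'a word topology set" where
  "markov_family X = {F. topological_group (free_group (topspace X)) F \<and> continuous_map X F free_gen}"

lemma FM_top_eq: "FM_top X = topology_generated_by (\<Union>F \<in> markov_family X. {U. openin F U})"
  unfolding FM_top_def markov_family_def by (rule arg_cong[where f = topology_generated_by]) blast

lemma topspace_markov_family:
  "F \<in> markov_family X \<Longrightarrow> topspace F = carrier (free_group (topspace X))"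
  by (simp add: markov_family_def topological_group_def group_with_topology_def)

lemma indiscrete_in_markov_family:
  "indiscrete_topology (carrier (free_group (topspace X))) \<in> markov_family X"
  unfolding markov_family_def
  by (auto simp: topological_group_indiscrete_topology group_free_group free_gen_carrier
      intro!: continuous_map_into_indiscrete_topology)

lemma openin_FM_top_if_markov:
  "F \<in> markov_family X \<Longrightarrow> openin F U \<Longrightarrow> openin (FM_top X) U"
  unfolding FM_top_eq by (rule topology_generated_by_Basis) blast

lemma topspace_FM_top: "topspace (FM_top X) = carrier (free_group (topspace X))"
proof -
  have "openin (FM_top X) (carrier (free_group (topspace X)))"
    by (rule openin_FM_top_if_markov[OF indiscrete_in_markov_family])
      (simp add: openin_indiscrete_topology)
  moreover have "U \<subseteq> carrier (free_group (topspace X))"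
    if "F \<in> markov_family X" "openin F U" for F U
    using openin_subset[OF that(2)] topspace_markov_family[OF that(1)] by simp
  then have "topspace (FM_top X) \<subseteq> carrier (free_group (topspace X))"
    unfolding FM_top_eq by auto
  ultimately show ?thesis using openin_subset by blast
qed

lemma continuous_map_into_FM_top:
  assumes cont: "\<And>F. F \<in> markov_family X \<Longrightarrow> continuous_map Y F g"
    and into: "g ` topspace Y \<subseteq> carrier (free_group (topspace X))"
  shows "continuous_map Y (FM_top X) g"
  unfolding FM_top_eq
proof (rule continuous_on_generated_topo)
  fix U assume "U \<in> (\<Union>F \<in> markov_family X. {U. openin F U})"
  then obtain F where F: "F \<in> markov_family X" "openin F U" by blast
  have "openin Y {y \<in> topspace Y. g y \<in> U}"
    by (rule openin_continuous_map_preimage[OF cont[OF F(1)] F(2)])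
  moreover have "{y \<in> topspace Y. g y \<in> U} = g -` U \<inter> topspace Y" by auto
  ultimately show "openin Y (g -` U \<inter> topspace Y)" by simp
next
  have "carrier (free_group (topspace X)) \<in> (\<Union>F \<in> markov_family X. {U. openin F U})"
    using indiscrete_in_markov_family by (force simp: openin_indiscrete_topology)
  then show "g ` topspace Y \<subseteq> \<Union>(\<Union>F \<in> markov_family X. {U. openin F U})"
    using into by blast
qed

lemma continuous_map_free_gen: "continuous_map X (FM_top X) free_gen"
  by (rule continuous_map_into_FM_top) (auto simp: markov_family_def free_gen_carrier)

text \<open>Multiplication on the free group is jointly continuous for FM_top X, because it is
  for every (coarser) member of the family.\<close>
lemma continuous_map_FM_top_mult:
  "continuous_map (prod_topology (FM_top X) (FM_top X)) (FM_top X)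
     (\<lambda>(v, w). v \<otimes>\<^bsub>free_group (topspace X)\<^esub> w)"
proof (rule continuous_map_into_FM_top)
  fix F assume F: "F \<in> markov_family X"
  have "continuous_map (prod_topology (FM_top X) (FM_top X)) (prod_topology F F) id"
    using openin_prod_topology_mono[OF openin_FM_top_if_markov[OF F] openin_FM_top_if_markov[OF F]]
    by (subst topology_finer_continuous_id[symmetric])
      (auto simp: topspace_FM_top topspace_markov_family[OF F])
  moreover have "continuous_map (prod_topology F F) F (\<lambda>(v, w). v \<otimes>\<^bsub>free_group (topspace X)\<^esub> w)"
    using F by (simp add: markov_family_def topological_group_def)
  ultimately show "continuous_map (prod_topology (FM_top X) (FM_top X)) F
      (\<lambda>(v, w). v \<otimes>\<^bsub>free_group (topspace X)\<^esub> w)"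
    using continuous_map_compose by fastforce
qed (auto simp: topspace_FM_top group_free_group monoid.m_closed[OF group.is_monoid])

lemma continuous_map_FM_top_mult_right:
  assumes "c \<in> carrier (free_group (topspace X))"
  shows "continuous_map (FM_top X) (FM_top X) (\<lambda>v. v \<otimes>\<^bsub>free_group (topspace X)\<^esub> c)"
proof -
  have "continuous_map (FM_top X) (prod_topology (FM_top X) (FM_top X)) (\<lambda>v. (v, c))"
    using assms by (intro continuous_map_pairedI) (simp_all add: topspace_FM_top)
  from continuous_map_compose[OF this continuous_map_FM_top_mult] show ?thesis
    by (simp add: o_def)
qed

lemma topological_group_pullback:
  assumes hom: "group_hom F G \<phi>" and H: "topological_group G H"
  shows "topological_group F (pullback_topology (carrier F) \<phi> H)"
proof -
  interpret group_hom F G \<phi> by (rule hom)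
  let ?P = "pullback_topology (carrier F) \<phi> H"
  have top_H: "topspace H = carrier G"
    and mult_H: "continuous_map (prod_topology H H) H (\<lambda>(x, y). x \<otimes>\<^bsub>G\<^esub> y)"
    and inv_H: "continuous_map H H (\<lambda>x. inv\<^bsub>G\<^esub> x)"
    using H by (auto simp: topological_group_def group_with_topology_def)
  have top_P: "topspace ?P = carrier F"
    by (auto simp: topspace_pullback_topology top_H)
  have cont_\<phi>: "continuous_map ?P H \<phi>"
    using continuous_map_pullback[OF continuous_map_id, of "carrier F" \<phi> H] by simp
  have "continuous_map (prod_topology ?P ?P) ?P (\<lambda>(v, w). v \<otimes>\<^bsub>F\<^esub> w)"
  proof (rule continuous_map_pullback')
    have "continuous_map (prod_topology ?P ?P) H ((\<lambda>(x, y). x \<otimes>\<^bsub>G\<^esub> y) \<circ> (\<lambda>(v, w). (\<phi> v, \<phi> w)))"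
      by (rule continuous_map_compose[OF continuous_map_prod_top[THEN iffD2] mult_H])
        (simp add: cont_\<phi>)
    then show "continuous_map (prod_topology ?P ?P) H (\<phi> \<circ> (\<lambda>(v, w). v \<otimes>\<^bsub>F\<^esub> w))"
      by (rule continuous_map_eq) (auto simp: top_P)
  qed (auto simp: top_P)
  moreover have "continuous_map ?P ?P (\<lambda>v. inv\<^bsub>F\<^esub> v)"
  proof (rule continuous_map_pullback')
    show "continuous_map ?P H (\<phi> \<circ> (\<lambda>v. inv\<^bsub>F\<^esub> v))"
      by (rule continuous_map_eq[OF continuous_map_compose[OF cont_\<phi> inv_H]]) (auto simp: top_P)
  qed (auto simp: top_P)
  ultimately show ?thesis
    using hom by (simp add: topological_group_def group_with_topology_def top_P group_hom_def)
qed

subsection \<open>The topology tau(G)\<close>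

context
  fixes G :: "'g monoid" (structure) and T :: "'g topology"
  assumes grp: "group G" and top_T: "topspace T = carrier G"
begin

interpretation group_hom "free_group (carrier G)" G "mult_epi G"
  by (rule mult_epi_group_hom[OF grp])

lemma openin_tau_top:
  "openin (tau_top G T) U \<longleftrightarrow>
     U \<subseteq> carrier G \<and> openin (FM_top T) {w \<in> carrier (free_group (carrier G)). mult_epi G w \<in> U}"
  by (simp add: tau_top_def openin_quotient_topology topspace_FM_top top_T)

lemma topspace_tau_top: "topspace (tau_top G T) = carrier G"
  unfolding tau_top_def by (rule topspace_quotient_topology) (auto simp: topspace_FM_top top_T)

text \<open>tau(G) is coarser than T, since the generator map G \<rightarrow> F_M(G) is continuous.\<close>
lemma tau_top_coarser:
  assumes U: "openin (tau_top G T) U"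
  shows "openin T U"
proof -
  let ?W = "{w \<in> carrier (free_group (carrier G)). mult_epi G w \<in> U}"
  have "openin (FM_top T) ?W" and sub: "U \<subseteq> carrier G" using U by (auto simp: openin_tau_top)
  then have "openin T {x \<in> topspace T. free_gen x \<in> ?W}"
    using openin_continuous_map_preimage[OF continuous_map_free_gen] by blast
  moreover have "{x \<in> topspace T. free_gen x \<in> ?W} = U"
    using sub by (auto simp: top_T free_gen_carrier mult_epi_free_gen[OF grp])
  ultimately show ?thesis by simp
qed

text \<open>The multiplication epimorphism is an open map F_M(G) \<rightarrow> tau(G): the saturation of an
  open set V is a union of right translates of V by elements of the kernel.\<close>
lemma openin_tau_top_image:
  assumes V: "openin (FM_top T) V"
  shows "openin (tau_top G T) (mult_epi G ` V)"
proof -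
  let ?F = "free_group (carrier G)"
  have V_carrier: "V \<subseteq> carrier ?F" using openin_subset[OF V] by (simp add: topspace_FM_top top_T)
  let ?Q = "{w \<in> carrier ?F. mult_epi G w \<in> mult_epi G ` V}"
  have "openin (FM_top T) ?Q"
    unfolding openin_subopen[of _ ?Q]
  proof
    fix w assume w: "w \<in> ?Q"
    then obtain v where v: "v \<in> V" "mult_epi G w = mult_epi G v" by auto
    have w_carrier: "w \<in> carrier ?F" and v_carrier: "v \<in> carrier ?F" using w v V_carrier by auto
    define k where "k = inv\<^bsub>?F\<^esub> w \<otimes>\<^bsub>?F\<^esub> v"
    have k_carrier: "k \<in> carrier ?F" unfolding k_def using w_carrier v_carrier by simp
    have k_kernel: "mult_epi G k = \<one>"
      unfolding k_def using w_carrier v_carrier v(2) by (simp add: H.l_inv)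
    let ?N = "{x \<in> topspace (FM_top T). x \<otimes>\<^bsub>?F\<^esub> k \<in> V}"
    have "openin (FM_top T) ?N"
      using continuous_map_FM_top_mult_right[of k T] k_carrier V
      by (simp add: top_T openin_continuous_map_preimage)
    moreover have "w \<otimes>\<^bsub>?F\<^esub> k = v"
      unfolding k_def using w_carrier v_carrier by (simp add: G.m_assoc[symmetric])
    then have "w \<in> ?N" using w_carrier v by (simp add: topspace_FM_top top_T)
    moreover have "?N \<subseteq> ?Q"
    proof
      fix x assume x: "x \<in> ?N"
      then have x_carrier: "x \<in> carrier ?F" by (simp add: topspace_FM_top top_T)
      have "mult_epi G x = mult_epi G (x \<otimes>\<^bsub>?F\<^esub> k)"
        using x_carrier k_carrier k_kernel by simp
      then show "x \<in> ?Q" using x x_carrier by auto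
    qed
    ultimately show "\<exists>N. openin (FM_top T) N \<and> w \<in> N \<and> N \<subseteq> ?Q" by blast
  qed
  moreover have "mult_epi G ` V \<subseteq> carrier G" using V_carrier by auto
  ultimately show ?thesis by (simp add: openin_tau_top)
qed

text \<open>Multiplication is jointly continuous in tau(G): it is the image of the jointly
  continuous multiplication of F_M(G) under the open homomorphism mult_epi G.\<close>
lemma continuous_map_tau_top_mult:
  "continuous_map (prod_topology (tau_top G T) (tau_top G T)) (tau_top G T) (\<lambda>(x, y). x \<otimes> y)"
  unfolding continuous_map_def
proof (intro conjI allI impI)
  let ?F = "free_group (carrier G)"
  let ?tau = "tau_top G T"
  show "(\<lambda>(x, y). x \<otimes> y) \<in> topspace (prod_topology ?tau ?tau) \<rightarrow> topspace ?tau"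
    by (auto simp: topspace_tau_top)
  fix U assume U: "openin ?tau U"
  let ?Z = "{z \<in> topspace (prod_topology ?tau ?tau). (\<lambda>(x, y). x \<otimes> y) z \<in> U}"
  let ?M = "{z \<in> topspace (prod_topology (FM_top T) (FM_top T)).
               (\<lambda>(v, w). v \<otimes>\<^bsub>?F\<^esub> w) z \<in> {w \<in> carrier ?F. mult_epi G w \<in> U}}"
  have "openin (FM_top T) {w \<in> carrier ?F. mult_epi G w \<in> U}"
    using U by (simp add: openin_tau_top)
  then have M: "openin (prod_topology (FM_top T) (FM_top T)) ?M"
    by (rule openin_continuous_map_preimage[OF continuous_map_FM_top_mult[of T, unfolded top_T]])
  show "openin (prod_topology ?tau ?tau) ?Z"
    unfolding openin_prod_topology_alt
  proof (intro allI impI)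
    fix a b assume ab: "(a, b) \<in> ?Z"
    then have a: "a \<in> carrier G" and b: "b \<in> carrier G" and abU: "a \<otimes> b \<in> U"
      by (auto simp: topspace_tau_top)
    have "(free_gen a, free_gen b) \<in> ?M"
      using a b abU by (simp add: topspace_FM_top top_T free_gen_carrier mult_epi_free_gen[OF grp])
    then obtain Va Vb where VV: "openin (FM_top T) Va" "openin (FM_top T) Vb"
      "free_gen a \<in> Va" "free_gen b \<in> Vb" "Va \<times> Vb \<subseteq> ?M"
      using M unfolding openin_prod_topology_alt by meson
    show "\<exists>A B. openin ?tau A \<and> openin ?tau B \<and> a \<in> A \<and> b \<in> B \<and> A \<times> B \<subseteq> ?Z"
    proof (intro exI conjI)
      show "openin ?tau (mult_epi G ` Va)" "openin ?tau (mult_epi G ` Vb)"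
        using VV(1,2) by (simp_all add: openin_tau_top_image)
      show "a \<in> mult_epi G ` Va" "b \<in> mult_epi G ` Vb"
        using VV(3,4) mult_epi_free_gen[OF grp] a b by (metis image_eqI)+
      show "mult_epi G ` Va \<times> mult_epi G ` Vb \<subseteq> ?Z"
      proof
        fix p assume "p \<in> mult_epi G ` Va \<times> mult_epi G ` Vb"
        then obtain v w where p: "p = (mult_epi G v, mult_epi G w)" and "v \<in> Va" "w \<in> Vb" by blast
        then have "(v, w) \<in> ?M" using VV(5) by blast
        then show "p \<in> ?Z" unfolding p by (auto simp: topspace_tau_top topspace_FM_top top_T)
      qed
    qed
  qed
qed

text \<open>Every group topology on G coarser than T is coarser than tau(G): its pullback to the
  free group belongs to the Markov family.\<close>
lemma tau_top_finer:
  assumes H: "topological_group G H" and HT: "\<And>V. openin H V \<Longrightarrow> openin T V"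
    and U: "openin H U"
  shows "openin (tau_top G T) U"
proof -
  let ?F = "free_group (carrier G)"
  let ?P = "pullback_topology (carrier ?F) (mult_epi G) H"
  have top_H: "topspace H = carrier G"
    using H by (simp add: topological_group_def group_with_topology_def)
  have "continuous_map T ?P free_gen"
  proof (rule continuous_map_pullback')
    have "continuous_map T H id"
      using HT by (subst topology_finer_continuous_id[symmetric]) (auto simp: top_T top_H)
    then show "continuous_map T H (mult_epi G \<circ> free_gen)"
      by (rule continuous_map_eq) (simp add: top_T mult_epi_free_gen[OF grp])
  qed (auto simp: top_T free_gen_carrier)
  then have "?P \<in> markov_family T"
    using topological_group_pullback[OF mult_epi_group_hom[OF grp] H]
    by (simp add: markov_family_def top_T)
  moreover have "openin ?P {w \<in> carrier ?F. mult_epi G w \<in> U}"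
    unfolding openin_pullback_topology using U by blast
  ultimately have "openin (FM_top T) {w \<in> carrier ?F. mult_epi G w \<in> U}"
    by (rule openin_FM_top_if_markov)
  then show ?thesis
    using openin_subset[OF U] by (simp add: openin_tau_top top_H)
qed

end

subsection \<open>The transfinite sequence\<close>

lemma index_cases:
  fixes i :: "'i::ord"
  obtains (least) "\<forall>j. \<not> j < i"
  | (succ) p where "p < i" "\<not> (\<exists>k. p < k \<and> k < i)"
  | (limit) "\<exists>j. j < i" "\<forall>j. j < i \<longrightarrow> (\<exists>k. j < k \<and> k < i)"
  by blast

context
  fixes G :: "'g monoid" and T :: "'g topology" and S :: "'i::wellorder \<Rightarrow> 'g topology"
  assumes qt: "quasitopological_group G T" and seq: "transfinite_seq G T S"
begin

lemma transfinite_seq_least: "\<forall>j. \<not> j < i \<Longrightarrow> S i = T"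
  using seq by (simp add: transfinite_seq_def)

lemma transfinite_seq_succ: "p < i \<Longrightarrow> \<not> (\<exists>k. p < k \<and> k < i) \<Longrightarrow> S i = c_top G (S p)"
  using seq by (simp add: transfinite_seq_def)

lemma openin_transfinite_seq_limit:
  "\<exists>j. j < i \<Longrightarrow> \<forall>j. j < i \<longrightarrow> (\<exists>k. j < k \<and> k < i) \<Longrightarrow>
     openin (S i) U \<longleftrightarrow> (\<forall>j. j < i \<longrightarrow> openin (S j) U)"
  using seq by (simp add: transfinite_seq_def openin_Inter_topology)

lemma transfinite_seq_quasitopological: "quasitopological_group G (S i)"
proof (induction i rule: less_induct)
  case (less i)
  show ?case
  proof (cases i rule: index_cases)
    case least
    then show ?thesis using qt by (simp add: transfinite_seq_least)
  next
    case (succ p)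
    have qt_p: "quasitopological_group G (S p)" using less succ(1) by blast
    show ?thesis
      using quasitopological_group_c_top[OF quasitopological_groupD(1,2)[OF qt_p] qt_p]
      by (simp add: transfinite_seq_succ[OF succ])
  next
    case limit
    then have "S i = topology (\<lambda>U. \<forall>j. j < i \<longrightarrow> openin (S j) U)"
      using seq by (simp add: transfinite_seq_def)
    moreover obtain j0 where "j0 < i" using limit by blast
    ultimately show ?thesis
      using quasitopological_group_Inter_topology[of "\<lambda>j. j < i" j0 G S] less by simp
  qed
qed

lemma transfinite_seq_antitone: "j \<le> i \<Longrightarrow> openin (S i) U \<Longrightarrow> openin (S j) U"
proof (induction i arbitrary: j rule: less_induct)
  case (less i)
  show ?case
  proof (cases "j = i")
    case False
    then have ji: "j < i" using less.prems by simp
    show ?thesis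
    proof (cases i rule: index_cases)
      case least
      then show ?thesis using ji by blast
    next
      case (succ p)
      have "openin (c_top G (S p)) U" using less.prems by (simp add: transfinite_seq_succ[OF succ])
      then have "openin (S p) U"
        by (rule c_top_coarser[OF quasitopological_groupD(1,2)[OF transfinite_seq_quasitopological]])
      moreover have "j \<le> p" using succ ji by (meson not_le)
      ultimately show ?thesis using less.IH succ(1) by blast
    next
      case limit
      then show ?thesis using less.prems ji by (simp add: openin_transfinite_seq_limit)
    qed
  qed (use less in simp)
qed

lemma transfinite_seq_coarser: "openin (S i) U \<Longrightarrow> openin T U"
proof -
  define i0 :: 'i where "i0 = (LEAST k. True)"
  have "\<forall>j. \<not> j < i0" unfolding i0_def by (meson not_less_Least)
  then have "S i0 = T" "i0 \<le> i" by (auto simp: transfinite_seq_least not_less)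
  then show "openin (S i) U \<Longrightarrow> openin T U" using transfinite_seq_antitone by metis
qed

text \<open>A topology K coarser than T in which multiplication is jointly continuous is coarser
  than every G_alpha: c only removes open sets that such a K cannot contain.\<close>
lemma transfinite_seq_lower_bound:
  assumes top_K: "topspace K = carrier G"
    and mult_K: "continuous_map (prod_topology K K) K (\<lambda>(x, y). x \<otimes>\<^bsub>G\<^esub> y)"
    and KT: "\<And>V. openin K V \<Longrightarrow> openin T V"
  shows "openin K U \<Longrightarrow> openin (S i) U"
proof (induction i arbitrary: U rule: less_induct)
  case (less i)
  show ?case
  proof (cases i rule: index_cases)
    case least
    then show ?thesis using KT less.prems by (simp add: transfinite_seq_least)
  next
    case (succ p)
    have "openin (c_top G (S p)) U"
      by (rule c_top_finer[OF quasitopological_groupD(1,2)[OF transfinite_seq_quasitopological]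
            top_K mult_K less.IH[OF succ(1)] less.prems])
    then show ?thesis by (simp add: transfinite_seq_succ[OF succ])
  next
    case limit
    then show ?thesis using less by (simp add: openin_transfinite_seq_limit)
  qed
qed

text \<open>If the index type is too large to embed into the topologies on G, the sequence repeats
  a value, and then it is constant from there on: some G_alpha is a fixed point of c.\<close>
lemma transfinite_seq_fixed_point:
  assumes "\<nexists>f :: 'i \<Rightarrow> 'g topology. inj f"
  shows "\<exists>a. c_top G (S a) = S a"
proof -
  obtain a b where ab: "a < b" "S a = S b"
    using assms unfolding inj_def by (metis linorder_neqE)
  define s where "s = (LEAST k. a < k)"
  have as: "a < s" and sb: "s \<le> b" unfolding s_def using ab(1) by (auto intro: LeastI Least_le)
  have "\<not> (\<exists>k. a < k \<and> k < s)" unfolding s_def using not_less_Least by blast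
  then have Ss: "S s = c_top G (S a)" by (rule transfinite_seq_succ[OF as])
  have "S s = S a"
    unfolding topology_eq
    using transfinite_seq_antitone[OF less_imp_le[OF as]] transfinite_seq_antitone[OF sb] ab(2)
    by metis
  then show ?thesis using Ss by auto
qed

end

theorem theorem3p8:
  fixes G :: "'g monoid" and T :: "'g topology" and S :: "'i::wellorder \<Rightarrow> 'g topology"
  assumes "quasitopological_group G T"
    and "transfinite_seq G T S"
  shows "(\<forall>i. quasitopological_group G (S i))
       \<and> ((\<nexists>f :: 'i \<Rightarrow> 'g topology. inj f) \<longrightarrow> (\<exists>i. S i = tau_top G T))"
proof (intro conjI allI impI)
  show "quasitopological_group G (S i)" for i
    by (rule transfinite_seq_quasitopological[OF assms])
  assume "\<nexists>f :: 'i \<Rightarrow> 'g topology. inj f"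
  then obtain a where fixed: "c_top G (S a) = S a"
    using transfinite_seq_fixed_point[OF assms] by blast
  have grp: "group G" and top_T: "topspace T = carrier G"
    using quasitopological_groupD(1,2)[OF assms(1)] by auto
  have qt_a: "quasitopological_group G (S a)" by (rule transfinite_seq_quasitopological[OF assms])
  have top_group_a: "topological_group G (S a)"
    by (rule topological_group_if_c_top_fixed[OF grp quasitopological_groupD(2)[OF qt_a] qt_a fixed])
  have "S a = tau_top G T"
    unfolding topology_eq
  proof (intro allI iffI)
    fix U assume "openin (S a) U"
    then show "openin (tau_top G T) U"
      using tau_top_finer[OF grp top_T top_group_a] transfinite_seq_coarser[OF assms] by blast
  next
    fix U assume "openin (tau_top G T) U"
    then show "openin (S a) U"
      using transfinite_seq_lower_bound[OF assms topspace_tau_top[OF grp top_T]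
            continuous_map_tau_top_mult[OF grp top_T] tau_top_coarser[OF grp top_T]] by blast
  qed
  then show "\<exists>i. S i = tau_top G T" by blast
qed

end
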